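(* Let $(V,E)$ be a finite graph and $p\in[0,1]$. Define rates on $\{0,1\}^E\times\{-1,1\}^V$ as follows: if there exists $x\in V$ such that $\sigma'=\sigma^x$ and $\eta'(e)=\eta(e)$ for all $e\in E\setminus E_x$, then $$c((\eta,\sigma),(\eta',\sigma'))=(1-p)^{|\{e\in E_x:\eta'(e)=0\}|}\,p^{|\{e\in E_x:\eta'(e)=1\}|}\,\mathbf 1_{(\eta',\sigma')\in\mathcal C_x};$$ otherwise, for $(\eta,\sigma)\neq(\eta',\sigma')$, the rate is $0$; and $c((\eta,\sigma),(\eta,\sigma))=-\sum_{(\eta',\sigma')\ne(\eta,\sigma)}c((\eta,\sigma),(\eta',\sigma'))$. Then these rates satisfy the detailed balance equation $IP(\eta,\sigma)c((\eta,\sigma),(\eta',\sigma'))=IP(\eta',\sigma')c((\eta',\sigma'),(\eta,\sigma))$ for all pairs of states.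
   Context: Edge configurations $\eta\in\{0,1\}^E$, spin configurations $\sigma\in\{-1,1\}^V$. For $e=\langle x,y\rangle$, $\delta_\sigma(e)=\mathbf 1_{\sigma(x)=\sigma(y)}$. $IP(\eta,\sigma)=\frac1Z\prod_{e\in E}\big(p\mathbf 1_{\eta(e)=1}\delta_\sigma(e)+(1-p)\mathbf 1_{\eta(e)=0}\big)$ with $Z$ the normalizing constant. $E_x$ is the set of edges with endvertex $x$; $\sigma^x$ is $\sigma$ with the spin at $x$ flipped. $\mathcal C_x=\{(\eta,\sigma):\eta(e)\le\delta_\sigma(e)\text{ for all }e\in E_x\}$. *)

theory Defs
  imports Complex_Main
begin

text \<open>A finite (multi)graph: vertex set V, edge set E, and an endpoint map
  ends assigning to each edge its pair of endvertices.\<close>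

definition states :: "'v set \<Rightarrow> 'e set \<Rightarrow> (('e \<Rightarrow> nat) \<times> ('v \<Rightarrow> int)) set" where
  "states V E = {(eta, sigma).
      (\<forall>e. if e \<in> E then eta e \<in> {0, 1} else eta e = 0) \<and>
      (\<forall>v. if v \<in> V then sigma v \<in> {-1, 1} else sigma v = 1)}"

definition delta :: "('e \<Rightarrow> 'v \<times> 'v) \<Rightarrow> ('v \<Rightarrow> int) \<Rightarrow> 'e \<Rightarrow> nat" where
  "delta ends sigma e = (if sigma (fst (ends e)) = sigma (snd (ends e)) then 1 else 0)"

definition weight :: "'e set \<Rightarrow> ('e \<Rightarrow> 'v \<times> 'v) \<Rightarrow> real \<Rightarrow> ('e \<Rightarrow> nat) \<times> ('v \<Rightarrow> int) \<Rightarrow> real" where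
  "weight E ends p s = (case s of (eta, sigma) \<Rightarrow>
     (\<Prod>e\<in>E. p * (if eta e = 1 then real (delta ends sigma e) else 0)
              + (1 - p) * (if eta e = 0 then 1 else 0)))"

definition IP :: "'v set \<Rightarrow> 'e set \<Rightarrow> ('e \<Rightarrow> 'v \<times> 'v) \<Rightarrow> real \<Rightarrow> ('e \<Rightarrow> nat) \<times> ('v \<Rightarrow> int) \<Rightarrow> real" where
  "IP V E ends p s = weight E ends p s / (\<Sum>t\<in>states V E. weight E ends p t)"

definition edges_at :: "'e set \<Rightarrow> ('e \<Rightarrow> 'v \<times> 'v) \<Rightarrow> 'v \<Rightarrow> 'e set" where
  "edges_at E ends x = {e \<in> E. fst (ends e) = x \<or> snd (ends e) = x}"

definition flip :: "('v \<Rightarrow> int) \<Rightarrow> 'v \<Rightarrow> ('v \<Rightarrow> int)" where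
  "flip sigma x = sigma(x := - sigma x)"

definition Cx :: "'e set \<Rightarrow> ('e \<Rightarrow> 'v \<times> 'v) \<Rightarrow> 'v \<Rightarrow> (('e \<Rightarrow> nat) \<times> ('v \<Rightarrow> int)) set" where
  "Cx E ends x = {(eta, sigma). \<forall>e\<in>edges_at E ends x. eta e \<le> delta ends sigma e}"

definition update_at :: "'e set \<Rightarrow> ('e \<Rightarrow> 'v \<times> 'v) \<Rightarrow> 'v
    \<Rightarrow> ('e \<Rightarrow> nat) \<times> ('v \<Rightarrow> int) \<Rightarrow> ('e \<Rightarrow> nat) \<times> ('v \<Rightarrow> int) \<Rightarrow> bool" where
  "update_at E ends x s s' \<longleftrightarrow>
     snd s' = flip (snd s) x \<and> (\<forall>e\<in>E - edges_at E ends x. fst s' e = fst s e)"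

definition offrate :: "'v set \<Rightarrow> 'e set \<Rightarrow> ('e \<Rightarrow> 'v \<times> 'v) \<Rightarrow> real
    \<Rightarrow> ('e \<Rightarrow> nat) \<times> ('v \<Rightarrow> int) \<Rightarrow> ('e \<Rightarrow> nat) \<times> ('v \<Rightarrow> int) \<Rightarrow> real" where
  "offrate V E ends p s s' =
     (if \<exists>x\<in>V. update_at E ends x s s' then
        (let x = (SOME x. x \<in> V \<and> update_at E ends x s s') in
           (1 - p) ^ card {e \<in> edges_at E ends x. fst s' e = 0}
           * p ^ card {e \<in> edges_at E ends x. fst s' e = 1}
           * (if s' \<in> Cx E ends x then 1 else 0))
      else 0)"

definition rate :: "'v set \<Rightarrow> 'e set \<Rightarrow> ('e \<Rightarrow> 'v \<times> 'v) \<Rightarrow> real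
    \<Rightarrow> ('e \<Rightarrow> nat) \<times> ('v \<Rightarrow> int) \<Rightarrow> ('e \<Rightarrow> nat) \<times> ('v \<Rightarrow> int) \<Rightarrow> real" where
  "rate V E ends p s s' =
     (if s' = s then - (\<Sum>t\<in>states V E - {s}. offrate V E ends p s t)
      else offrate V E ends p s s')"

end

theory Submission
  imports Defs
begin

text \<open>The weight is a product over edges. Split it at a vertex x into the factor over the edges
  E_x and the factor over the remaining edges. An update at x leaves the second factor unchanged,
  since those edges keep their occupation and both their endpoints keep their spins. The first
  factor is (1-p)^#0 p^#1 on C_x and 0 off C_x, i.e. exactly the rate of jumping into the state.
  So both sides of detailed balance equal (normalisation) * (common factor) * (first factor of the
  one state) * (first factor of the other). The vertex x is determined by the pair of states,
  because spins are nonzero and a flip changes exactly one of them.\<close>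

definition edge_factor :: "('e \<Rightarrow> 'v \<times> 'v) \<Rightarrow> real \<Rightarrow> ('e \<Rightarrow> nat) \<times> ('v \<Rightarrow> int) \<Rightarrow> 'e \<Rightarrow> real" where
  "edge_factor ends p s e = p * (if fst s e = 1 then real (delta ends (snd s) e) else 0)
     + (1 - p) * (if fst s e = 0 then 1 else 0)"

definition local_weight :: "'e set \<Rightarrow> ('e \<Rightarrow> 'v \<times> 'v) \<Rightarrow> real \<Rightarrow> 'v
    \<Rightarrow> ('e \<Rightarrow> nat) \<times> ('v \<Rightarrow> int) \<Rightarrow> real" where
  "local_weight E ends p x s =
     (1 - p) ^ card {e \<in> edges_at E ends x. fst s e = 0}
     * p ^ card {e \<in> edges_at E ends x. fst s e = 1}
     * (if s \<in> Cx E ends x then 1 else 0)"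

lemma states_edge_value: "s \<in> states V E \<Longrightarrow> e \<in> E \<Longrightarrow> fst s e \<in> {0, 1}"
  by (cases s) (auto simp: states_def split: if_splits)

lemma states_spin_value: "s \<in> states V E \<Longrightarrow> v \<in> V \<Longrightarrow> snd s v \<in> {-1, 1}"
  by (cases s) (auto simp: states_def split: if_splits)

lemma finite_edges_at: "finite E \<Longrightarrow> finite (edges_at E ends x)"
  by (simp add: edges_at_def)

lemma weight_eq_prod_edge_factor: "weight E ends p s = (\<Prod>e\<in>E. edge_factor ends p s e)"
  by (cases s) (auto simp: weight_def edge_factor_def intro!: prod.cong)

lemma update_at_sym: "update_at E ends x s s' \<Longrightarrow> update_at E ends x s' s"
  by (auto simp: update_at_def flip_def)

lemma update_at_unique:
  assumes "s \<in> states V E" "x \<in> V" "update_at E ends x s s'" "update_at E ends y s s'"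
  shows "x = y"
proof (rule ccontr)
  assume "x \<noteq> y"
  moreover have "flip (snd s) x x = flip (snd s) y x"
    using assms(3,4) by (simp add: update_at_def)
  ultimately have "snd s x = 0" by (simp add: flip_def)
  with states_spin_value[OF assms(1,2)] show False by simp
qed

lemma offrate_update_at:
  assumes "s \<in> states V E" "x \<in> V" "update_at E ends x s s'"
  shows "offrate V E ends p s s' = local_weight E ends p x s'"
proof -
  have "(SOME y. y \<in> V \<and> update_at E ends y s s') = x"
    using assms update_at_unique[OF assms(1)] by (metis (mono_tags, lifting) someI_ex)
  then show ?thesis using assms by (auto simp: offrate_def local_weight_def)
qed

lemma prod_edge_factor_outside_edges_at:
  assumes "update_at E ends x s s'"
  shows "(\<Prod>e\<in>E - edges_at E ends x. edge_factor ends p s e) =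
    (\<Prod>e\<in>E - edges_at E ends x. edge_factor ends p s' e)"
proof (rule prod.cong[OF refl])
  fix e assume e: "e \<in> E - edges_at E ends x"
  then have "fst (ends e) \<noteq> x" "snd (ends e) \<noteq> x" by (auto simp: edges_at_def)
  then have "delta ends (snd s') e = delta ends (snd s) e"
    using assms by (simp add: update_at_def delta_def flip_def)
  moreover have "fst s' e = fst s e" using assms e by (simp add: update_at_def)
  ultimately show "edge_factor ends p s e = edge_factor ends p s' e" by (simp add: edge_factor_def)
qed

lemma edge_factor_zero_one:
  assumes "fst s e \<in> {0, 1}"
  shows "edge_factor ends p s e =
    (if fst s e > delta ends (snd s) e then 0 else if fst s e = 0 then 1 - p else p)"
  using assms by (auto simp: edge_factor_def delta_def)

lemma prod_zero_one_eq_powers: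
  assumes "finite A" "\<forall>e\<in>A. f e \<in> {0, 1 :: nat}"
  shows "(\<Prod>e\<in>A. if f e = 0 then a else b) = a ^ card {e \<in> A. f e = 0} * b ^ card {e \<in> A. f e = 1}"
proof -
  have "{e \<in> A. f e \<noteq> 0} = {e \<in> A. f e = 1}" using assms(2) by auto
  then show ?thesis using assms(1) by (simp add: prod.If_cases Int_def set_diff_eq)
qed

lemma prod_edge_factor_edges_at:
  assumes "finite E" "s \<in> states V E"
  shows "(\<Prod>e\<in>edges_at E ends x. edge_factor ends p s e) = local_weight E ends p x s"
proof -
  have zero_one: "\<forall>e\<in>edges_at E ends x. fst s e \<in> {0, 1}"
    using states_edge_value[OF assms(2)] by (auto simp: edges_at_def)
  show ?thesis
  proof (cases "s \<in> Cx E ends x")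
    case True
    then have "\<forall>e\<in>edges_at E ends x. fst s e \<le> delta ends (snd s) e"
      by (cases s) (simp add: Cx_def)
    then have "(\<Prod>e\<in>edges_at E ends x. edge_factor ends p s e) =
        (\<Prod>e\<in>edges_at E ends x. if fst s e = 0 then 1 - p else p)"
      using zero_one by (intro prod.cong) (auto simp: edge_factor_zero_one)
    then show ?thesis
      using True prod_zero_one_eq_powers[OF finite_edges_at[OF assms(1)] zero_one]
      by (simp add: local_weight_def)
  next
    case False
    then obtain e where e: "e \<in> edges_at E ends x" "fst s e > delta ends (snd s) e"
      by (cases s) (auto simp: Cx_def not_le)
    then have "edge_factor ends p s e = 0" using zero_one edge_factor_zero_one by metis
    then have "(\<Prod>e\<in>edges_at E ends x. edge_factor ends p s e) = 0"
      using finite_edges_at[OF assms(1)] e(1) by (rule_tac prod_zero) auto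
    then show ?thesis using False by (simp add: local_weight_def)
  qed
qed

lemma weight_split_edges_at:
  assumes "finite E" "s \<in> states V E"
  shows "weight E ends p s =
    (\<Prod>e\<in>E - edges_at E ends x. edge_factor ends p s e) * local_weight E ends p x s"
proof -
  have "weight E ends p s =
      (\<Prod>e\<in>E - edges_at E ends x. edge_factor ends p s e) * (\<Prod>e\<in>edges_at E ends x. edge_factor ends p s e)"
    unfolding weight_eq_prod_edge_factor by (rule prod.subset_diff) (auto simp: edges_at_def assms(1))
  then show ?thesis by (simp add: prod_edge_factor_edges_at[OF assms])
qed

theorem proposition4:
  fixes V :: "'v set" and E :: "'e set" and ends :: "'e \<Rightarrow> 'v \<times> 'v" and p :: real
  assumes "finite V" and "finite E"
    and "\<forall>e\<in>E. fst (ends e) \<in> V \<and> snd (ends e) \<in> V"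
    and "0 \<le> p" and "p \<le> 1"
    and "s \<in> states V E" and "s' \<in> states V E"
  shows "IP V E ends p s * rate V E ends p s s' = IP V E ends p s' * rate V E ends p s' s"
proof (cases "s = s'")
  case False
  then have rates: "rate V E ends p s s' = offrate V E ends p s s'"
      "rate V E ends p s' s = offrate V E ends p s' s"
    by (simp_all add: rate_def)
  show ?thesis
  proof (cases "\<exists>x\<in>V. update_at E ends x s s'")
    case False
    then have "\<not> (\<exists>x\<in>V. update_at E ends x s' s)" using update_at_sym by meson
    with False show ?thesis by (simp add: rates offrate_def)
  next
    case True
    then obtain x where x: "x \<in> V" "update_at E ends x s s'" by blast
    note x' = update_at_sym[OF x(2)]
    define B where "B = (\<Prod>e\<in>E - edges_at E ends x. edge_factor ends p s e)"
    have "weight E ends p s = B * local_weight E ends p x s"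
      unfolding B_def by (rule weight_split_edges_at[OF assms(2,6)])
    moreover have "weight E ends p s' = B * local_weight E ends p x s'"
      unfolding B_def prod_edge_factor_outside_edges_at[OF x(2)]
      by (rule weight_split_edges_at[OF assms(2,7)])
    ultimately show ?thesis
      by (simp add: rates IP_def offrate_update_at[OF assms(6) x] offrate_update_at[OF assms(7) x(1) x'])
  qed
qed simp

end
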